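(* Let $\mathbf{x},\mathbf{z}\in B_2^n$. Let $\mathbf{a}$ be a random vector in $\mathbb{R}^n$ with i.i.d. mean-zero, variance-one, sub-gaussian entries (each distributed as $a$) whose sub-gaussian norm is bounded by $\kappa$, and let $\mathbf{g}$ be a vector of independent standard normal entries. Let $\theta:\mathbb{R}\to\mathbb{R}$ be a measurable function whose second and third derivatives exist and satisfy $\|\theta''\|_\infty\le\tau_2$ and $\|\theta'''\|_\infty\le\tau_3$. Then $$\big|\mathbb{E}\theta(\langle\mathbf{a},\mathbf{x}\rangle)\langle\mathbf{a},\mathbf{z}\rangle-\mathbb{E}\theta(\langle\mathbf{g},\mathbf{x}\rangle)\langle\mathbf{g},\mathbf{z}\rangle\big|\le C(\tau_2+\tau_3)\,\mathbb{E}a^4\,\|\mathbf{x}\|_\infty,$$ where $C>0$ is an absolute constant.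
   Context: The sub-gaussian norm of $a$ is $\sup_{q\ge1}q^{-1/2}(\mathbb{E}|a|^q)^{1/q}$. $B_2^n$ is the Euclidean unit ball. *)

theory Defs
  imports "HOL-Probability.Probability"
begin

definition std_gaussian :: "real measure" where
  "std_gaussian = density lborel std_normal_density"

definition subgaussian_norm_le :: "real measure \<Rightarrow> real \<Rightarrow> bool" where
  "subgaussian_norm_le D \<kappa> \<longleftrightarrow>
     (\<forall>q::real. q \<ge> 1 \<longrightarrow>
        integrable D (\<lambda>t. \<bar>t\<bar> powr q) \<and>
        q powr (-1/2) * (\<integral>t. \<bar>t\<bar> powr q \<partial>D) powr (1/q) \<le> \<kappa>)"

text \<open>Inner product and sup-norm of vectors in R^n, represented as nat \<Rightarrow> real on {..<n}.\<close>
definition inner_n :: "nat \<Rightarrow> (nat \<Rightarrow> real) \<Rightarrow> (nat \<Rightarrow> real) \<Rightarrow> real" where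
  "inner_n n u v = (\<Sum>i<n. u i * v i)"

definition linf_norm :: "nat \<Rightarrow> (nat \<Rightarrow> real) \<Rightarrow> real" where
  "linf_norm n x = Max (insert 0 ((\<lambda>i. \<bar>x i\<bar>) ` {..<n}))"

end

theory Submission
  imports Defs
begin

(* Lindeberg's replacement method. Let F be the expectation of theta(s + <a,x>) (t + <a,z>)
   for a vector a with independent coordinates. Replacing the law of one coordinate a_k = y by
   another law with mean 0 and variance 1 changes F only by the third-order Taylor remainder of
   y |-> theta(s + y x_k) (t + y z_k), because its expansion up to y^2 has the same expectation
   under both laws. A swap therefore costs at most
   E|y|^3 (tau3 |x_k|^3 E|t + <a,z>| / 6 + tau2 x_k^2 |z_k| / 2),
   and E|t + <a,z>| <= sqrt (t^2 + |z|^2) by Jensen. Swapping the coordinates one at a time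
   bounds the difference by (E|a|^3 + E|g|^3) (tau3/6 sum |x_k|^3 + tau2/2 sum x_k^2 |z_k|).
   Finally E|a|^3 + E|g|^3 <= 3 E a^4, and both sums are at most |x|_oo for unit vectors x, z,
   which gives C = 3/2. *)

definition standardized :: "real measure \<Rightarrow> bool" where
  "standardized N \<longleftrightarrow> prob_space N \<and> sets N = sets borel \<and> integrable N (\<lambda>u. \<bar>u\<bar>^3)
     \<and> integrable N (\<lambda>u. u) \<and> integrable N (\<lambda>u. u^2) \<and> (\<integral>u. u \<partial>N) = 0 \<and> (\<integral>u. u^2 \<partial>N) = 1"

lemma standardizedD:
  assumes "standardized N"
  shows "prob_space N" "sets N = sets borel" "integrable N (\<lambda>u. \<bar>u\<bar>^3)"
    "integrable N (\<lambda>u. u)" "integrable N (\<lambda>u. u^2)" "(\<integral>u. u \<partial>N) = 0" "(\<integral>u. u^2 \<partial>N) = 1"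
  using assms by (simp_all add: standardized_def)

section \<open>The standard Gaussian law\<close>

lemma prob_space_std_gaussian: "prob_space std_gaussian"
  unfolding std_gaussian_def by (rule prob_space_normal_density) simp

lemma integrable_std_gaussian_power:
  "integrable std_gaussian (\<lambda>u. \<bar>u\<bar>^k)" "integrable std_gaussian (\<lambda>u. u^k)"
  unfolding std_gaussian_def
  by (subst integrable_density;
      auto simp: integrable_std_normal_moment_abs integrable_std_normal_moment)+

lemma integral_std_gaussian:
  fixes f :: "real \<Rightarrow> real"
  assumes "f \<in> borel_measurable borel"
  shows "(\<integral>u. f u \<partial>std_gaussian) = (\<integral>u. std_normal_density u * f u \<partial>lborel)"
  unfolding std_gaussian_def using assms
  by (subst integral_density) auto

lemma standardized_std_gaussian: "standardized std_gaussian"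
proof -
  have "(\<integral>u. u \<partial>std_gaussian) = 0"
    using integral_std_gaussian[of "\<lambda>u. u"] integral_std_normal_moment_odd[of 0] by simp
  moreover have "(\<integral>u. u^2 \<partial>std_gaussian) = 1"
    using integral_std_gaussian[of "\<lambda>u. u^2"] integral_std_normal_moment_even[of 1] by simp
  ultimately show ?thesis
    using prob_space_std_gaussian integrable_std_gaussian_power[of 1] integrable_std_gaussian_power[of 2]
      integrable_std_gaussian_power[of 3]
    by (simp add: standardized_def std_gaussian_def)
qed

lemma std_gaussian_abs_moment3_le: "(\<integral>u. \<bar>u\<bar>^3 \<partial>std_gaussian) \<le> 2"
proof -
  have "(\<integral>u. \<bar>u\<bar>^3 \<partial>std_gaussian) = 2 * sqrt (2/pi)"
    using integral_std_gaussian[of "\<lambda>u. \<bar>u\<bar>^3"] integral_std_normal_moment_abs_odd[of 1] by simp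
  also have "sqrt (2/pi) \<le> 1" using pi_gt3 by simp
  finally show ?thesis by simp
qed

lemma taylor_remainder_2:
  fixes f f' f'' :: "real \<Rightarrow> real"
  assumes "\<And>t. (f has_real_derivative f' t) (at t)" "\<And>t. (f' has_real_derivative f'' t) (at t)"
    and "\<And>t. \<bar>f'' t\<bar> \<le> B"
  shows "\<bar>f (s + h) - (f s + f' s * h)\<bar> \<le> B * h^2 / 2"
proof -
  define d where "d m = (\<lambda>u. ([f, f', f''] ! m) (u + s))" for m
  have "\<forall>m u. m < 2 \<and> \<bar>u\<bar> \<le> \<bar>h\<bar> \<longrightarrow> (d m has_real_derivative d (Suc m) u) (at u)"
    using assms(1,2) by (auto simp: d_def less_2_cases_iff simp flip: DERIV_shift)
  then obtain c where "d 0 h = (\<Sum>m<2. d m 0 / fact m * h ^ m) + d 2 c / fact 2 * h ^ 2"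
    using Maclaurin_bi_le[of d "d 0" 2 h] by auto
  then have "f (s + h) - (f s + f' s * h) = f'' (c + s) / 2 * h^2"
    by (simp add: d_def eval_nat_numeral add.commute)
  also have "\<bar>\<dots>\<bar> \<le> B * h^2 / 2"
    using assms(3)[of "c + s"] by (simp add: abs_mult mult_right_mono)
  finally show ?thesis .
qed

lemma taylor_remainder_3:
  fixes f f' f'' f''' :: "real \<Rightarrow> real"
  assumes "\<And>t. (f has_real_derivative f' t) (at t)" "\<And>t. (f' has_real_derivative f'' t) (at t)"
    and "\<And>t. (f'' has_real_derivative f''' t) (at t)" and "\<And>t. \<bar>f''' t\<bar> \<le> B"
  shows "\<bar>f (s + h) - (f s + f' s * h + f'' s * h^2 / 2)\<bar> \<le> B * \<bar>h\<bar>^3 / 6"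
proof -
  define d where "d m = (\<lambda>u. ([f, f', f'', f'''] ! m) (u + s))" for m
  have "\<forall>m u. m < 3 \<and> \<bar>u\<bar> \<le> \<bar>h\<bar> \<longrightarrow> (d m has_real_derivative d (Suc m) u) (at u)"
  proof (intro allI impI)
    fix m :: nat and u :: real assume "m < 3 \<and> \<bar>u\<bar> \<le> \<bar>h\<bar>"
    then consider "m = 0" | "m = 1" | "m = 2" by linarith
    then show "(d m has_real_derivative d (Suc m) u) (at u)"
      by cases (use assms(1-3) in \<open>simp_all add: d_def numeral_2_eq_2 flip: DERIV_shift\<close>)
  qed
  then obtain c where "d 0 h = (\<Sum>m<3. d m 0 / fact m * h ^ m) + d 3 c / fact 3 * h ^ 3"
    using Maclaurin_bi_le[of d "d 0" 3 h] by auto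
  then have "f (s + h) - (f s + f' s * h + f'' s * h^2 / 2) = f''' (c + s) / 6 * h^3"
    by (simp add: d_def eval_nat_numeral add.commute)
  also have "\<bar>\<dots>\<bar> \<le> B * \<bar>h\<bar>^3 / 6"
    using assms(4)[of "c + s"] by (simp add: abs_mult power_abs mult_right_mono)
  finally show ?thesis .
qed

lemma cube_add_le: "0 \<le> a \<Longrightarrow> 0 \<le> b \<Longrightarrow> (a + b)^3 \<le> 4 * (a^3 + b^3 :: real)"
proof -
  assume "0 \<le> a" "0 \<le> b"
  then have "0 \<le> 3 * (a + b) * (a - b)^2" by simp
  moreover have "4 * (a^3 + b^3) - (a + b)^3 = 3 * (a + b) * (a - b)^2" by algebra
  ultimately show ?thesis by linarith
qed

lemma sum_cube_le:
  fixes y :: "'i \<Rightarrow> real"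
  assumes "finite I" "\<And>i. i \<in> I \<Longrightarrow> 0 \<le> y i"
  shows "(\<Sum>i\<in>I. y i)^3 \<le> 4^card I * (\<Sum>i\<in>I. y i^3)"
  using assms
proof (induction I rule: finite_induct)
  case (insert j F)
  have "(\<Sum>i\<in>insert j F. y i)^3 = (y j + (\<Sum>i\<in>F. y i))^3" using insert by simp
  also have "\<dots> \<le> 4 * (y j^3 + (\<Sum>i\<in>F. y i)^3)"
    using insert by (intro cube_add_le) (auto intro: sum_nonneg)
  also have "\<dots> \<le> 4 * (4^card F * y j^3 + 4^card F * (\<Sum>i\<in>F. y i^3))"
    using insert mult_right_mono[OF one_le_power[of "4::real" "card F"], of "y j^3"]
    by (intro mult_left_mono add_mono) auto
  also have "\<dots> = 4^card (insert j F) * (\<Sum>i\<in>insert j F. y i^3)"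
    using insert by (simp add: algebra_simps)
  finally show ?case .
qed simp

lemma one_plus_abs_affine_le:
  fixes a x :: "'i \<Rightarrow> real"
  assumes "finite I"
  shows "1 + \<bar>s + (\<Sum>i\<in>I. a i * x i)\<bar> \<le> (1 + \<bar>s\<bar> + (\<Sum>i\<in>I. \<bar>x i\<bar>)) * (1 + (\<Sum>i\<in>I. \<bar>a i\<bar>))"
proof -
  define X where "X = (\<Sum>i\<in>I. \<bar>x i\<bar>)"
  define W where "W = (\<Sum>i\<in>I. \<bar>a i\<bar>)"
  have "0 \<le> X" "0 \<le> W" by (simp_all add: X_def W_def sum_nonneg)
  have "\<bar>(\<Sum>i\<in>I. a i * x i)\<bar> \<le> (\<Sum>i\<in>I. \<bar>a i\<bar> * X)"
    using assms unfolding X_def by (intro order.trans[OF sum_abs] sum_mono)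
      (auto simp: abs_mult intro!: mult_left_mono member_le_sum)
  then have "1 + \<bar>s + (\<Sum>i\<in>I. a i * x i)\<bar> \<le> 1 + \<bar>s\<bar> + X * W"
    unfolding W_def sum_distrib_right[symmetric] using abs_triangle_ineq[of s] by (simp add: mult.commute)
  also have "\<dots> \<le> (1 + \<bar>s\<bar> + X) * (1 + W)"
    using \<open>0 \<le> X\<close> \<open>0 \<le> W\<close> by (simp add: algebra_simps)
  finally show ?thesis by (simp add: X_def W_def)
qed

lemma sqrt_le_tangent: "0 \<le> v \<Longrightarrow> 0 < q \<Longrightarrow> sqrt v \<le> (v + q^2) / (2 * q)"
proof -
  assume "0 \<le> v" "0 < q"
  have "0 \<le> (sqrt v - q)^2" by simp
  then have "2 * q * sqrt v \<le> v + q^2"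
    using \<open>0 \<le> v\<close> by (simp add: power2_eq_square algebra_simps)
  then show ?thesis using \<open>0 < q\<close> by (simp add: field_simps)
qed

lemma abs_integral_le_integral:
  fixes f g :: "'a \<Rightarrow> real"
  assumes "integrable M f" "integrable M g" "\<And>x. \<bar>f x\<bar> \<le> g x"
  shows "\<bar>\<integral>x. f x \<partial>M\<bar> \<le> (\<integral>x. g x \<partial>M)"
  using integral_abs_bound[of M f] integral_mono[OF integrable_abs[OF assms(1)] assms(2,3)] by linarith

lemma (in prob_space) integral_sqrt_le:
  fixes X :: "'a \<Rightarrow> real"
  assumes X: "integrable M X" and nonneg: "\<And>\<omega>. 0 \<le> X \<omega>"
  shows "integrable M (\<lambda>\<omega>. sqrt (X \<omega>))" and "(\<integral>\<omega>. sqrt (X \<omega>) \<partial>M) \<le> sqrt (\<integral>\<omega>. X \<omega> \<partial>M)"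
proof -
  have tangent: "sqrt (X \<omega>) \<le> (X \<omega> + q^2) / (2 * q)" if "0 < q" for q \<omega>
    using sqrt_le_tangent[OF nonneg that] .
  have bound: "norm (sqrt (X \<omega>)) \<le> norm ((X \<omega> + 1) / 2)" for \<omega>
    using tangent[of 1 \<omega>] nonneg[of \<omega>] by simp
  have "integrable M (\<lambda>\<omega>. (X \<omega> + 1) / 2)" using X by simp
  moreover have msqrt: "(\<lambda>\<omega>. sqrt (X \<omega>)) \<in> borel_measurable M"
    using borel_measurable_integrable[OF X] by (rule measurable_compose) simp
  ultimately show int: "integrable M (\<lambda>\<omega>. sqrt (X \<omega>))"
    by (rule Bochner_Integration.integrable_bound) (rule AE_I2, rule bound)
  show "(\<integral>\<omega>. sqrt (X \<omega>) \<partial>M) \<le> sqrt (\<integral>\<omega>. X \<omega> \<partial>M)"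
  proof (cases "(\<integral>\<omega>. X \<omega> \<partial>M) = 0")
    case True
    then have "AE \<omega> in M. X \<omega> = 0"
      using integral_nonneg_eq_0_iff_AE[OF X] nonneg by simp
    then have "(\<integral>\<omega>. sqrt (X \<omega>) \<partial>M) = (\<integral>\<omega>. 0 \<partial>M)"
      using msqrt by (intro integral_cong_AE) auto
    then show ?thesis using True by simp
  next
    case False
    define q where "q = sqrt (\<integral>\<omega>. X \<omega> \<partial>M)"
    have "0 \<le> (\<integral>\<omega>. X \<omega> \<partial>M)" using nonneg by (simp add: integral_nonneg)
    then have q: "0 < q" "q^2 = (\<integral>\<omega>. X \<omega> \<partial>M)" using False by (simp_all add: q_def)
    have "(\<integral>\<omega>. sqrt (X \<omega>) \<partial>M) \<le> (\<integral>\<omega>. (X \<omega> + q^2) / (2 * q) \<partial>M)"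
      using X tangent[OF q(1)] by (intro integral_mono[OF int]) auto
    also have "\<dots> = ((\<integral>\<omega>. X \<omega> \<partial>M) + q^2) / (2 * q)"
      using X by (simp add: prob_space)
    also have "\<dots> = q" using q by (simp add: field_simps power2_eq_square)
    finally show ?thesis by (simp add: q_def)
  qed
qed

section \<open>Finite products of laws on the real line\<close>

lemma borel_measurable_PiM_cong_borel:
  assumes "\<And>i. i \<in> I \<Longrightarrow> sets (M i) = sets borel"
  shows "borel_measurable (PiM I M) = borel_measurable (PiM I (\<lambda>_. borel))"
  by (intro measurable_cong_sets sets_PiM_cong refl assms)

lemma integrable_PiM_component:
  fixes g :: "'a \<Rightarrow> real"
  assumes "\<And>i. prob_space (M i)" "i \<in> I" "integrable (M i) g"
  shows "integrable (PiM I M) (\<lambda>a. g (a i))"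
proof -
  interpret product_prob_space M I
    using assms(1) by (auto simp: product_prob_space_def product_sigma_finite_def
        product_prob_space_axioms_def intro: prob_space_imp_sigma_finite)
  have "integrable (distr (PiM I M) (M i) (\<lambda>a. a i)) g"
    using assms(2,3) by (simp add: PiM_component)
  then show ?thesis
    using assms(2,3) by (subst (asm) integrable_distr_eq) auto
qed

lemma PiM_insert_Fubini:
  fixes M :: "'i \<Rightarrow> 'a measure" and f :: "('i \<Rightarrow> 'a) \<Rightarrow> real"
  assumes M: "\<And>i. prob_space (M i)" and "finite I" "j \<notin> I"
    and f: "integrable (PiM (insert j I) M) f"
  shows "(\<integral>a. f a \<partial>PiM (insert j I) M) = (\<integral>a. (\<integral>y. f (a(j:=y)) \<partial>M j) \<partial>PiM I M)"
    and "(\<integral>a. f a \<partial>PiM (insert j I) M) = (\<integral>y. (\<integral>a. f (a(j:=y)) \<partial>PiM I M) \<partial>M j)"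
    and "integrable (PiM I M) (\<lambda>a. \<integral>y. f (a(j:=y)) \<partial>M j)"
    and "integrable (M j) (\<lambda>y. \<integral>a. f (a(j:=y)) \<partial>PiM I M)"
proof -
  interpret J: prob_space "M j" by (rule M)
  interpret I: prob_space "PiM I M" by (rule prob_space_PiM) (rule M)
  interpret P: pair_sigma_finite "M j" "PiM I M" ..
  let ?upd = "\<lambda>(y, a). a(j := y)"
  have upd: "?upd \<in> measurable (M j \<Otimes>\<^sub>M PiM I M) (PiM (insert j I) M)"
    by measurable
  have D: "distr (M j \<Otimes>\<^sub>M PiM I M) (PiM (insert j I) M) ?upd = PiM (insert j I) M"
    by (rule distr_pair_PiM_eq_PiM) (rule M)+
  have fb: "f \<in> borel_measurable (PiM (insert j I) M)" using f by auto
  have "integrable (distr (M j \<Otimes>\<^sub>M PiM I M) (PiM (insert j I) M) ?upd) f"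
    by (subst D) (rule f)
  then have fi: "integrable (M j \<Otimes>\<^sub>M PiM I M) (\<lambda>(y, a). f (a(j:=y)))"
    unfolding integrable_distr_eq[OF upd fb] by (simp add: case_prod_beta')
  have "(\<integral>a. f a \<partial>distr (M j \<Otimes>\<^sub>M PiM I M) (PiM (insert j I) M) ?upd)
      = (\<integral>p. (\<lambda>(y, a). f (a(j:=y))) p \<partial>(M j \<Otimes>\<^sub>M PiM I M))"
    by (subst integral_distr[OF upd fb]) (simp add: case_prod_beta')
  then have eq: "(\<integral>a. f a \<partial>PiM (insert j I) M) = (\<integral>p. (\<lambda>(y, a). f (a(j:=y))) p \<partial>(M j \<Otimes>\<^sub>M PiM I M))"
    by (simp only: D)
  show "(\<integral>a. f a \<partial>PiM (insert j I) M) = (\<integral>a. (\<integral>y. f (a(j:=y)) \<partial>M j) \<partial>PiM I M)"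
    unfolding eq using P.integral_snd[OF fi] by simp
  show "(\<integral>a. f a \<partial>PiM (insert j I) M) = (\<integral>y. (\<integral>a. f (a(j:=y)) \<partial>PiM I M) \<partial>M j)"
    unfolding eq using P.integral_fst[OF fi] by simp
  show "integrable (PiM I M) (\<lambda>a. \<integral>y. f (a(j:=y)) \<partial>M j)"
    using P.integrable_snd[OF fi] by simp
  show "integrable (M j) (\<lambda>y. \<integral>a. f (a(j:=y)) \<partial>PiM I M)"
    using P.integrable_fst[OF fi] by simp
qed

lemma integrable_PiM_cubic_growth:
  fixes M :: "'i \<Rightarrow> real measure" and f :: "('i \<Rightarrow> real) \<Rightarrow> real"
  assumes I: "finite I" and M: "\<And>i. standardized (M i)"
    and f: "f \<in> borel_measurable (PiM I M)"
    and growth: "\<And>a. \<bar>f a\<bar> \<le> K * (1 + (\<Sum>i\<in>I. \<bar>a i\<bar>))^3"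
  shows "integrable (PiM I M) f"
proof -
  interpret prob_space "PiM I M" using M by (intro prob_space_PiM standardizedD)
  define g where "g a = \<bar>K\<bar> * (4 * (1 + 4^card I * (\<Sum>i\<in>I. \<bar>a i\<bar>^3)))" for a :: "'i \<Rightarrow> real"
  have "integrable (PiM I M) (\<lambda>a. \<bar>a i\<bar>^3)" if "i \<in> I" for i
    using M by (intro integrable_PiM_component that) (auto dest: standardizedD)
  then have ig: "integrable (PiM I M) g" unfolding g_def by auto
  have bound: "norm (f a) \<le> norm (g a)" for a
  proof -
    define W where "W = (\<Sum>i\<in>I. \<bar>a i\<bar>)"
    have "0 \<le> W" by (simp add: W_def sum_nonneg)
    have "\<bar>f a\<bar> \<le> \<bar>K\<bar> * (1 + W)^3"
      using growth[of a] mult_right_mono[OF abs_ge_self, of "(1 + W)^3" K] \<open>0 \<le> W\<close>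
      by (simp add: W_def)
    also have "(1 + W)^3 \<le> 4 * (1 + W^3)" using cube_add_le[of 1 W] \<open>0 \<le> W\<close> by simp
    also have "W^3 \<le> 4^card I * (\<Sum>i\<in>I. \<bar>a i\<bar>^3)"
      unfolding W_def using I by (rule sum_cube_le) simp
    finally have "\<bar>f a\<bar> \<le> g a" by (simp add: g_def mult_left_mono)
    then show ?thesis by simp
  qed
  show ?thesis
    by (rule Bochner_Integration.integrable_bound[OF ig f]) (rule AE_I2, rule bound)
qed

lemma integrable_PiM_affine_growth:
  fixes M :: "'i \<Rightarrow> real measure" and f :: "('i \<Rightarrow> real) \<Rightarrow> real"
  assumes I: "finite I" and M: "\<And>i. standardized (M i)"
    and f: "f \<in> borel_measurable (PiM I M)"
    and growth: "\<And>a. \<bar>f a\<bar> \<le>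
      K * (1 + \<bar>s + (\<Sum>i\<in>I. a i * x i)\<bar>)^2 * (1 + \<bar>t + (\<Sum>i\<in>I. a i * z i)\<bar>)"
  shows "integrable (PiM I M) f"
proof (rule integrable_PiM_cubic_growth[OF I M f])
  fix a :: "'i \<Rightarrow> real"
  define W where "W = 1 + (\<Sum>i\<in>I. \<bar>a i\<bar>)"
  define p where "p = 1 + \<bar>s\<bar> + (\<Sum>i\<in>I. \<bar>x i\<bar>)"
  define q where "q = 1 + \<bar>t\<bar> + (\<Sum>i\<in>I. \<bar>z i\<bar>)"
  have "1 + \<bar>s + (\<Sum>i\<in>I. a i * x i)\<bar> \<le> p * W" "1 + \<bar>t + (\<Sum>i\<in>I. a i * z i)\<bar> \<le> q * W"
    unfolding p_def q_def W_def using I by (rule one_plus_abs_affine_le)+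
  then have "(1 + \<bar>s + (\<Sum>i\<in>I. a i * x i)\<bar>)^2 * (1 + \<bar>t + (\<Sum>i\<in>I. a i * z i)\<bar>) \<le> (p * W)^2 * (q * W)"
    by (intro mult_mono power_mono) simp_all
  moreover have "\<bar>f a\<bar> \<le> \<bar>K\<bar> * ((1 + \<bar>s + (\<Sum>i\<in>I. a i * x i)\<bar>)^2 * (1 + \<bar>t + (\<Sum>i\<in>I. a i * z i)\<bar>))"
    using order.trans[OF growth[of a, unfolded mult.assoc] mult_right_mono[OF abs_ge_self]] by simp
  ultimately have "\<bar>f a\<bar> \<le> \<bar>K\<bar> * ((p * W)^2 * (q * W))"
    by (meson abs_ge_zero mult_left_mono order.trans)
  then show "\<bar>f a\<bar> \<le> (\<bar>K\<bar> * p^2 * q) * (1 + (\<Sum>i\<in>I. \<bar>a i\<bar>))^3"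
    by (simp add: W_def power2_eq_square power3_eq_cube algebra_simps)
qed

lemma inner_n_Suc_upd: "inner_n (Suc n) (a(n := y)) z = inner_n n a z + y * z n"
  unfolding inner_n_def by (simp add: sum.lessThan_Suc)

lemma integral_standardized_affine_square:
  assumes "standardized N"
  shows "integrable N (\<lambda>y. (w + y * c)^2)" and "(\<integral>y. (w + y * c)^2 \<partial>N) = w^2 + c^2"
proof -
  interpret prob_space N using assms by (rule standardizedD)
  have eq: "(\<lambda>y. (w + y * c)^2) = (\<lambda>y. w^2 + (2 * w * c) * y + c^2 * y^2)"
    by (simp add: fun_eq_iff power2_eq_square algebra_simps)
  show "integrable N (\<lambda>y. (w + y * c)^2)"
    unfolding eq using standardizedD(4,5)[OF assms] by simp
  show "(\<integral>y. (w + y * c)^2 \<partial>N) = w^2 + c^2"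
    unfolding eq using standardizedD(4-7)[OF assms] by (simp add: prob_space)
qed

lemma integrable_PiM_affine_form:
  fixes M :: "nat \<Rightarrow> real measure"
  assumes M: "\<And>i. standardized (M i)"
  shows "integrable (PiM {..<n} M) (\<lambda>a. (t + inner_n n a z)^2)"
    and "integrable (PiM {..<n} M) (\<lambda>a. \<bar>t + inner_n n a z\<bar>)"
proof -
  have meas: "borel_measurable (PiM {..<n} M) = borel_measurable (PiM {..<n} (\<lambda>_. borel))"
    using M by (intro borel_measurable_PiM_cong_borel standardizedD)
  have cube: "(1 + \<bar>w\<bar>)^2 * (1 + \<bar>w\<bar>) = 1 + 3 * \<bar>w\<bar> + 3 * w^2 + \<bar>w\<bar>^3" for w :: real
    by (simp add: power2_eq_square power3_eq_cube algebra_simps)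
  have growth: "w^2 \<le> (1 + \<bar>w\<bar>)^2 * (1 + \<bar>w\<bar>)" "\<bar>w\<bar> \<le> (1 + \<bar>w\<bar>)^2 * (1 + \<bar>w\<bar>)"
    for w :: real
    unfolding cube by simp_all
  show "integrable (PiM {..<n} M) (\<lambda>a. (t + inner_n n a z)^2)"
    by (rule integrable_PiM_affine_growth[OF _ M, where K=1 and s=t and x=z and t=t and z=z])
      (simp_all add: meas inner_n_def growth(1))
  show "integrable (PiM {..<n} M) (\<lambda>a. \<bar>t + inner_n n a z\<bar>)"
    by (rule integrable_PiM_affine_growth[OF _ M, where K=1 and s=t and x=z and t=t and z=z])
      (simp_all add: meas inner_n_def growth(2))
qed

lemma integral_PiM_affine_form_square:
  fixes M :: "nat \<Rightarrow> real measure"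
  assumes M: "\<And>i. standardized (M i)"
  shows "(\<integral>a. (t + inner_n n a z)^2 \<partial>PiM {..<n} M) = t^2 + (\<Sum>j<n. z j^2)"
proof (induction n arbitrary: t)
  case 0
  interpret prob_space "PiM {} M" using M by (intro prob_space_PiM standardizedD)
  show ?case by (simp add: inner_n_def prob_space)
next
  case (Suc n)
  have prob: "\<And>i. prob_space (M i)" using M by (rule standardizedD)
  interpret prob_space "PiM {..<n} M" using M by (intro prob_space_PiM standardizedD)
  have "(\<integral>a. (t + inner_n (Suc n) a z)^2 \<partial>PiM {..<Suc n} M)
      = (\<integral>a. (\<integral>y. (t + inner_n (Suc n) (a(n := y)) z)^2 \<partial>M n) \<partial>PiM {..<n} M)"
    using PiM_insert_Fubini(1)[OF prob _ _ integrable_PiM_affine_form(1)[OF M, where n="Suc n" and t=t and z=z,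
          unfolded lessThan_Suc]]
    by (simp add: lessThan_Suc)
  also have "\<dots> = (\<integral>a. (t + inner_n n a z)^2 + z n^2 \<partial>PiM {..<n} M)"
    using integral_standardized_affine_square(2)[OF M]
    by (simp add: inner_n_Suc_upd add.assoc[symmetric])
  also have "\<dots> = t^2 + (\<Sum>j<Suc n. z j^2)"
    using integrable_PiM_affine_form(1)[OF M] Suc by (simp add: prob_space)
  finally show ?case .
qed

lemma integral_PiM_abs_affine_form_le:
  fixes M :: "nat \<Rightarrow> real measure"
  assumes M: "\<And>i. standardized (M i)"
  shows "(\<integral>a. \<bar>t + inner_n n a z\<bar> \<partial>PiM {..<n} M) \<le> sqrt (t^2 + (\<Sum>j<n. z j^2))"
proof -
  interpret prob_space "PiM {..<n} M" using M by (intro prob_space_PiM standardizedD)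
  have "(\<integral>a. \<bar>t + inner_n n a z\<bar> \<partial>PiM {..<n} M) = (\<integral>a. sqrt ((t + inner_n n a z)^2) \<partial>PiM {..<n} M)"
    by simp
  also have "\<dots> \<le> sqrt (\<integral>a. (t + inner_n n a z)^2 \<partial>PiM {..<n} M)"
    using integrable_PiM_affine_form(1)[OF M] by (rule integral_sqrt_le) simp
  finally show ?thesis by (simp only: integral_PiM_affine_form_square[OF M])
qed

lemma integrable_abs_power_if_subgaussian:
  assumes "subgaussian_norm_le D \<kappa>" and "1 \<le> k"
  shows "integrable D (\<lambda>t. \<bar>t\<bar>^k)"
proof -
  have "integrable D (\<lambda>t. \<bar>t\<bar> powr real k)"
    using assms unfolding subgaussian_norm_le_def by simp
  moreover have "\<bar>t\<bar> powr real k = \<bar>t\<bar>^k" for t :: real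
    using assms(2) by (cases "t = 0") (simp_all add: powr_realpow)
  ultimately show ?thesis by simp
qed

lemma standardized_moment4_ge_1:
  assumes N: "standardized N" and N4: "integrable N (\<lambda>u. u^4)"
  shows "1 \<le> (\<integral>u. u^4 \<partial>N)"
proof -
  interpret prob_space N using N by (rule standardizedD)
  have "2 * u^2 - 1 \<le> u^4" for u :: real
    using zero_le_power2[of "u^2 - 1"] by (simp add: power2_eq_square power4_eq_xxxx algebra_simps)
  then have "(\<integral>u. 2 * u^2 - 1 \<partial>N) \<le> (\<integral>u. u^4 \<partial>N)"
    using standardizedD(5)[OF N] N4 by (intro integral_mono) auto
  then show ?thesis using standardizedD(5,7)[OF N] by (simp add: prob_space)
qed

lemma standardized_abs_moment3_le_moment4:
  assumes N: "standardized N" and N4: "integrable N (\<lambda>u. u^4)"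
  shows "(\<integral>u. \<bar>u\<bar>^3 \<partial>N) \<le> (\<integral>u. u^4 \<partial>N)"
proof -
  interpret prob_space N using N by (rule standardizedD)
  have "\<bar>u\<bar>^3 \<le> (u^2 + u^4) / 2" for u :: real
    using zero_le_power2[of "\<bar>u\<bar> * (\<bar>u\<bar> - 1)"]
    by (simp add: power2_eq_square power3_eq_cube power4_eq_xxxx algebra_simps)
  then have "(\<integral>u. \<bar>u\<bar>^3 \<partial>N) \<le> (\<integral>u. (u^2 + u^4) / 2 \<partial>N)"
    using standardizedD(3,5)[OF N] N4 by (intro integral_mono) auto
  also have "\<dots> = (1 + (\<integral>u. u^4 \<partial>N)) / 2"
    using standardizedD(5,7)[OF N] N4 by simp
  finally show ?thesis using standardized_moment4_ge_1[OF N N4] by simp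
qed

lemma linf_norm_nonneg: "0 \<le> linf_norm n x"
  unfolding linf_norm_def by (rule Max_ge) auto

lemma abs_le_linf_norm: "k < n \<Longrightarrow> \<bar>x k\<bar> \<le> linf_norm n x"
  unfolding linf_norm_def by (rule Max_ge) auto

lemma sum_abs_cube_le_linf_norm:
  assumes "(\<Sum>k<n. (x k)^2) \<le> 1"
  shows "(\<Sum>k<n. \<bar>x k\<bar>^3) \<le> linf_norm n x"
proof -
  have "\<bar>x k\<bar>^3 \<le> linf_norm n x * (x k)^2" if "k < n" for k
  proof -
    have "\<bar>x k\<bar>^3 = \<bar>x k\<bar> * (x k)^2" by (simp add: eval_nat_numeral)
    also have "\<dots> \<le> linf_norm n x * (x k)^2" using abs_le_linf_norm[OF that] by (rule mult_right_mono) simp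
    finally show ?thesis .
  qed
  then have "(\<Sum>k<n. \<bar>x k\<bar>^3) \<le> (\<Sum>k<n. linf_norm n x * (x k)^2)" by (intro sum_mono) simp
  also have "\<dots> \<le> linf_norm n x"
    using assms linf_norm_nonneg[of n x] by (simp add: sum_distrib_left[symmetric] mult_left_le)
  finally show ?thesis .
qed

lemma sum_square_mult_abs_le_linf_norm:
  assumes "(\<Sum>k<n. (x k)^2) \<le> 1" and "(\<Sum>k<n. (z k)^2) \<le> 1"
  shows "(\<Sum>k<n. (x k)^2 * \<bar>z k\<bar>) \<le> linf_norm n x"
proof -
  define L where "L = linf_norm n x"
  have L0: "0 \<le> L" unfolding L_def by (rule linf_norm_nonneg)
  have "(x k)^2 * \<bar>z k\<bar> \<le> L / 2 * (x k)^2 + L / 2 * (z k)^2" if "k < n" for k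
  proof -
    have "\<bar>x k\<bar> * \<bar>z k\<bar> \<le> ((x k)^2 + (z k)^2) / 2"
      using zero_le_power2[of "\<bar>x k\<bar> - \<bar>z k\<bar>"] by (simp add: power2_eq_square algebra_simps)
    then have "\<bar>x k\<bar> * (\<bar>x k\<bar> * \<bar>z k\<bar>) \<le> L * (((x k)^2 + (z k)^2) / 2)"
      using abs_le_linf_norm[OF that, of x] L0 unfolding L_def by (intro mult_mono) auto
    then show ?thesis by (simp add: power2_eq_square algebra_simps)
  qed
  then have "(\<Sum>k<n. (x k)^2 * \<bar>z k\<bar>) \<le> (\<Sum>k<n. L / 2 * (x k)^2 + L / 2 * (z k)^2)"
    by (intro sum_mono) auto
  also have "\<dots> = L / 2 * (\<Sum>k<n. (x k)^2) + L / 2 * (\<Sum>k<n. (z k)^2)"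
    by (simp add: sum.distrib sum_distrib_left)
  also have "\<dots> \<le> L / 2 + L / 2"
    using assms L0 by (intro add_mono mult_left_le) auto
  finally show ?thesis by (simp add: L_def)
qed

section \<open>The replacement argument\<close>

locale smooth_link =
  fixes \<theta> \<theta>' \<theta>'' \<theta>''' :: "real \<Rightarrow> real" and \<tau>2 \<tau>3 :: real
  assumes measurable_\<theta> [measurable]: "\<theta> \<in> borel_measurable borel"
    and deriv1: "\<And>t. (\<theta> has_real_derivative \<theta>' t) (at t)"
    and deriv2: "\<And>t. (\<theta>' has_real_derivative \<theta>'' t) (at t)"
    and deriv3: "\<And>t. (\<theta>'' has_real_derivative \<theta>''' t) (at t)"
    and bound2: "\<And>t. \<bar>\<theta>'' t\<bar> \<le> \<tau>2"
    and bound3: "\<And>t. \<bar>\<theta>''' t\<bar> \<le> \<tau>3"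
begin

lemma tau_nonneg: "0 \<le> \<tau>2" "0 \<le> \<tau>3"
  using bound2[of 0] bound3[of 0] by auto

lemma abs_theta_le: "\<bar>\<theta> w\<bar> \<le> (\<bar>\<theta> 0\<bar> + \<bar>\<theta>' 0\<bar> + \<tau>2) * (1 + \<bar>w\<bar>)^2"
proof -
  have sq: "(1 + \<bar>w\<bar>)^2 = 1 + 2 * \<bar>w\<bar> + w^2" by (simp add: power2_eq_square algebra_simps)
  have "\<bar>\<theta> w - (\<theta> 0 + \<theta>' 0 * w)\<bar> \<le> \<tau>2 * w^2 / 2"
    using taylor_remainder_2[OF deriv1 deriv2 bound2, of 0 w] by simp
  moreover have "\<bar>\<theta> 0 + \<theta>' 0 * w\<bar> \<le> \<bar>\<theta> 0\<bar> + \<bar>\<theta>' 0\<bar> * \<bar>w\<bar>"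
    using abs_triangle_ineq[of "\<theta> 0" "\<theta>' 0 * w"] by (simp add: abs_mult)
  moreover have "0 \<le> \<tau>2 * w^2" using tau_nonneg by simp
  ultimately have "\<bar>\<theta> w\<bar> \<le> \<bar>\<theta> 0\<bar> * 1 + \<bar>\<theta>' 0\<bar> * \<bar>w\<bar> + \<tau>2 * w^2"
    using abs_triangle_ineq2[of "\<theta> w" "\<theta> 0 + \<theta>' 0 * w"] by linarith
  also have "\<dots> \<le> \<bar>\<theta> 0\<bar> * (1 + \<bar>w\<bar>)^2 + \<bar>\<theta>' 0\<bar> * (1 + \<bar>w\<bar>)^2 + \<tau>2 * (1 + \<bar>w\<bar>)^2"
    unfolding sq using tau_nonneg by (intro add_mono mult_left_mono) simp_all
  finally show ?thesis by (simp add: algebra_simps)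
qed

lemma integrable_corr_integrand:
  fixes M :: "'i \<Rightarrow> real measure"
  assumes I: "finite I" and M: "\<And>i. standardized (M i)"
  shows "integrable (PiM I M) (\<lambda>a. \<theta> (s + (\<Sum>i\<in>I. a i * x i)) * (t + (\<Sum>i\<in>I. a i * z i)))"
proof (rule integrable_PiM_affine_growth[OF I M,
      where K="\<bar>\<theta> 0\<bar> + \<bar>\<theta>' 0\<bar> + \<tau>2" and s=s and x=x and t=t and z=z])
  show "(\<lambda>a. \<theta> (s + (\<Sum>i\<in>I. a i * x i)) * (t + (\<Sum>i\<in>I. a i * z i))) \<in> borel_measurable (PiM I M)"
    unfolding borel_measurable_PiM_cong_borel[OF standardizedD(2)[OF M]] by measurable
  fix a :: "'i \<Rightarrow> real"
  show "\<bar>\<theta> (s + (\<Sum>i\<in>I. a i * x i)) * (t + (\<Sum>i\<in>I. a i * z i))\<bar>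
      \<le> (\<bar>\<theta> 0\<bar> + \<bar>\<theta>' 0\<bar> + \<tau>2) * (1 + \<bar>s + (\<Sum>i\<in>I. a i * x i)\<bar>)^2 * (1 + \<bar>t + (\<Sum>i\<in>I. a i * z i)\<bar>)"
    unfolding abs_mult by (intro mult_mono abs_theta_le) (use tau_nonneg in auto)
qed

lemma taylor_product_remainder:
  "\<bar>\<theta> (s + u * c) * (t + u * d)
      - (t * \<theta> s + (t * \<theta>' s * c + d * \<theta> s) * u + (t * \<theta>'' s * c^2 / 2 + d * \<theta>' s * c) * u^2)\<bar>
    \<le> \<bar>u\<bar>^3 * (\<bar>t\<bar> * \<tau>3 * \<bar>c\<bar>^3 / 6 + \<bar>d\<bar> * \<tau>2 * c^2 / 2)"
proof -
  define r3 where "r3 = \<theta> (s + u * c) - (\<theta> s + \<theta>' s * (u * c) + \<theta>'' s * (u * c)^2 / 2)"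
  define r2 where "r2 = \<theta> (s + u * c) - (\<theta> s + \<theta>' s * (u * c))"
  have "\<bar>t * r3\<bar> \<le> \<bar>t\<bar> * (\<tau>3 * \<bar>u * c\<bar>^3 / 6)"
    unfolding abs_mult[of t] r3_def by (intro mult_left_mono taylor_remainder_3[OF deriv1 deriv2 deriv3 bound3]) simp
  moreover have "\<bar>(d * u) * r2\<bar> \<le> \<bar>d * u\<bar> * (\<tau>2 * (u * c)^2 / 2)"
    unfolding abs_mult[of "d * u"] r2_def
    by (intro mult_left_mono taylor_remainder_2[OF deriv1 deriv2 bound2]) simp
  moreover have "\<theta> (s + u * c) * (t + u * d)
      - (t * \<theta> s + (t * \<theta>' s * c + d * \<theta> s) * u + (t * \<theta>'' s * c^2 / 2 + d * \<theta>' s * c) * u^2)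
      = t * r3 + (d * u) * r2"
    by (simp add: r2_def r3_def algebra_simps power2_eq_square)
  moreover have "\<bar>t\<bar> * (\<tau>3 * \<bar>u * c\<bar>^3 / 6) + \<bar>d * u\<bar> * (\<tau>2 * (u * c)^2 / 2)
      = \<bar>u\<bar>^3 * (\<bar>t\<bar> * \<tau>3 * \<bar>c\<bar>^3 / 6 + \<bar>d\<bar> * \<tau>2 * c^2 / 2)"
    by (simp add: abs_mult power_mult_distrib algebra_simps power2_eq_square power3_eq_cube)
  ultimately show ?thesis by (smt (verit) abs_triangle_ineq)
qed

lemma integral_taylor_expansion:
  assumes N: "standardized N"
  shows "\<bar>(\<integral>u. \<theta> (s + u * c) * (t + u * d) \<partial>N) - (t * \<theta> s + t * \<theta>'' s * c^2 / 2 + d * \<theta>' s * c)\<bar>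
    \<le> (\<integral>u. \<bar>u\<bar>^3 \<partial>N) * (\<bar>t\<bar> * \<tau>3 * \<bar>c\<bar>^3 / 6 + \<bar>d\<bar> * \<tau>2 * c^2 / 2)"
proof -
  define K where "K = \<bar>t\<bar> * \<tau>3 * \<bar>c\<bar>^3 / 6 + \<bar>d\<bar> * \<tau>2 * c^2 / 2"
  define f where "f u = \<theta> (s + u * c) * (t + u * d)" for u
  define P where "P u = t * \<theta> s + (t * \<theta>' s * c + d * \<theta> s) * u + (t * \<theta>'' s * c^2 / 2 + d * \<theta>' s * c) * u^2"
    for u
  have "(\<lambda>u. f u - P u) \<in> borel_measurable borel"
    unfolding f_def P_def by measurable
  then have meas: "(\<lambda>u. f u - P u) \<in> borel_measurable N"
    using N by (subst measurable_cong_sets[OF standardizedD(2) refl])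
  interpret prob_space N using N by (rule standardizedD)
  have iP: "integrable N P" using standardizedD(4,5)[OF N] by (simp add: P_def[abs_def])
  have EP: "(\<integral>u. P u \<partial>N) = t * \<theta> s + t * \<theta>'' s * c^2 / 2 + d * \<theta>' s * c"
    using standardizedD(4-7)[OF N] by (simp add: P_def[abs_def] prob_space)
  have K0: "0 \<le> K" using tau_nonneg by (simp add: K_def)
  have remainder: "\<bar>f u - P u\<bar> \<le> \<bar>u\<bar>^3 * K" for u
    unfolding f_def P_def K_def by (rule taylor_product_remainder)
  have iR: "integrable N (\<lambda>u. f u - P u)"
    using standardizedD(3)[OF N]
    by (intro Bochner_Integration.integrable_bound[where f="\<lambda>u. \<bar>u\<bar>^3 * K", OF _ meas] AE_I2)
      (use remainder K0 in \<open>auto simp: abs_mult\<close>)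
  have "integrable N (\<lambda>u. (f u - P u) + P u)" using iR iP by (rule Bochner_Integration.integrable_add)
  then have iF: "integrable N f" by simp
  have "\<bar>(\<integral>u. f u \<partial>N) - (\<integral>u. P u \<partial>N)\<bar> = \<bar>\<integral>u. f u - P u \<partial>N\<bar>" using iF iP by simp
  also have "\<dots> \<le> (\<integral>u. \<bar>u\<bar>^3 * K \<partial>N)"
    using iR standardizedD(3)[OF N] remainder by (intro integral_abs_bound_integral) auto
  also have "\<dots> = (\<integral>u. \<bar>u\<bar>^3 \<partial>N) * K" by simp
  finally show ?thesis unfolding EP f_def K_def .
qed

(* The shifts s and t absorb the coordinates integrated out in the induction over n. *)
definition corr :: "(nat \<Rightarrow> real measure) \<Rightarrow> nat \<Rightarrow> (nat \<Rightarrow> real) \<Rightarrow> (nat \<Rightarrow> real) \<Rightarrow> real \<Rightarrow> real \<Rightarrow> real"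
  where "corr M n x z s t = (\<integral>a. \<theta> (s + inner_n n a x) * (t + inner_n n a z) \<partial>PiM {..<n} M)"

lemma corr_cong: "(\<And>i. i < n \<Longrightarrow> M i = M' i) \<Longrightarrow> corr M n x z s t = corr M' n x z s t"
  unfolding corr_def by (subst PiM_cong[of "{..<n}" "{..<n}" M M']) auto

lemma corr_Suc:
  fixes M :: "nat \<Rightarrow> real measure"
  assumes M: "\<And>i. standardized (M i)"
  shows "corr M (Suc n) x z s t
      = (\<integral>a. (\<integral>y. \<theta> (s + inner_n n a x + y * x n) * (t + inner_n n a z + y * z n) \<partial>M n) \<partial>PiM {..<n} M)"
    and "integrable (PiM {..<n} M)
      (\<lambda>a. \<integral>y. \<theta> (s + inner_n n a x + y * x n) * (t + inner_n n a z + y * z n) \<partial>M n)"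
    and "corr M (Suc n) x z s t = (\<integral>y. corr M n x z (s + y * x n) (t + y * z n) \<partial>M n)"
    and "integrable (M n) (\<lambda>y. corr M n x z (s + y * x n) (t + y * z n))"
proof -
  have prob: "\<And>i. prob_space (M i)" using M by (rule standardizedD)
  have "integrable (PiM (insert n {..<n}) M)
      (\<lambda>a. \<theta> (s + inner_n (Suc n) a x) * (t + inner_n (Suc n) a z))"
    using integrable_corr_integrand[OF _ M, where I="insert n {..<n}" and s=s and x=x and t=t and z=z]
    by (simp add: inner_n_def lessThan_Suc)
  note Fubini = PiM_insert_Fubini[OF prob _ _ this]
  show "corr M (Suc n) x z s t
      = (\<integral>a. (\<integral>y. \<theta> (s + inner_n n a x + y * x n) * (t + inner_n n a z + y * z n) \<partial>M n) \<partial>PiM {..<n} M)"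
    using Fubini(1) by (simp add: corr_def lessThan_Suc inner_n_Suc_upd add_ac)
  show "integrable (PiM {..<n} M)
      (\<lambda>a. \<integral>y. \<theta> (s + inner_n n a x + y * x n) * (t + inner_n n a z + y * z n) \<partial>M n)"
    using Fubini(3) by (simp add: inner_n_Suc_upd add_ac)
  show "corr M (Suc n) x z s t = (\<integral>y. corr M n x z (s + y * x n) (t + y * z n) \<partial>M n)"
    using Fubini(2) by (simp add: corr_def lessThan_Suc inner_n_Suc_upd add_ac)
  show "integrable (M n) (\<lambda>y. corr M n x z (s + y * x n) (t + y * z n))"
    using Fubini(4) by (simp add: corr_def inner_n_Suc_upd add_ac)
qed

lemma corr_swap_last:
  fixes M :: "nat \<Rightarrow> real measure"
  assumes M: "\<And>i. standardized (M i)" and N: "standardized N" and N': "standardized N'"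
  shows "\<bar>corr (M(n := N)) (Suc n) x z s t - corr (M(n := N')) (Suc n) x z s t\<bar>
    \<le> ((\<integral>u. \<bar>u\<bar>^3 \<partial>N) + (\<integral>u. \<bar>u\<bar>^3 \<partial>N'))
        * (\<tau>3 / 6 * \<bar>x n\<bar>^3 * sqrt (t^2 + (\<Sum>j<n. (z j)^2)) + \<tau>2 / 2 * (x n)^2 * \<bar>z n\<bar>)"
proof -
  define \<Phi> where "\<Phi> L a = (\<integral>y. \<theta> (s + inner_n n a x + y * x n) * (t + inner_n n a z + y * z n) \<partial>L)"
    for L a
  define m where "m = (\<integral>u. \<bar>u\<bar>^3 \<partial>N) + (\<integral>u. \<bar>u\<bar>^3 \<partial>N')"
  have m0: "0 \<le> m" unfolding m_def by (intro add_nonneg_nonneg integral_nonneg) auto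
  have "PiM {..<n} (M(n := L)) = PiM {..<n} M" for L by (rule PiM_cong) auto
  then have corr_L: "corr (M(n := L)) (Suc n) x z s t = (\<integral>a. \<Phi> L a \<partial>PiM {..<n} M)"
    and int_L: "integrable (PiM {..<n} M) (\<Phi> L)" if "standardized L" for L
    using corr_Suc(1,2)[where M="M(n := L)" and n=n and x=x and z=z and s=s and t=t] M that
    by (simp_all add: \<Phi>_def[abs_def])
  have pointwise: "\<bar>\<Phi> N a - \<Phi> N' a\<bar>
      \<le> m * (\<bar>t + inner_n n a z\<bar> * \<tau>3 * \<bar>x n\<bar>^3 / 6 + \<bar>z n\<bar> * \<tau>2 * (x n)^2 / 2)" for a
    using integral_taylor_expansion[OF N, of "s + inner_n n a x" "x n" "t + inner_n n a z" "z n"]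
      integral_taylor_expansion[OF N', of "s + inner_n n a x" "x n" "t + inner_n n a z" "z n"]
    unfolding \<Phi>_def m_def distrib_right by linarith
  interpret prob_space "PiM {..<n} M" using M by (intro prob_space_PiM standardizedD)
  have "\<bar>corr (M(n := N)) (Suc n) x z s t - corr (M(n := N')) (Suc n) x z s t\<bar>
      = \<bar>\<integral>a. \<Phi> N a - \<Phi> N' a \<partial>PiM {..<n} M\<bar>"
    using int_L N N' by (simp add: corr_L)
  also have "\<dots> \<le> (\<integral>a. m * (\<bar>t + inner_n n a z\<bar> * \<tau>3 * \<bar>x n\<bar>^3 / 6 + \<bar>z n\<bar> * \<tau>2 * (x n)^2 / 2)
      \<partial>PiM {..<n} M)"
    using int_L N N' integrable_PiM_affine_form(2)[where M=M, OF M] pointwise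
    by (intro abs_integral_le_integral) auto
  also have "\<dots> = m * ((\<integral>a. \<bar>t + inner_n n a z\<bar> \<partial>PiM {..<n} M) * \<tau>3 * \<bar>x n\<bar>^3 / 6
      + \<bar>z n\<bar> * \<tau>2 * (x n)^2 / 2)"
    using integrable_PiM_affine_form(2)[where M=M, OF M] by (simp add: prob_space)
  also have "\<dots> \<le> m * (sqrt (t^2 + (\<Sum>j<n. (z j)^2)) * \<tau>3 * \<bar>x n\<bar>^3 / 6
      + \<bar>z n\<bar> * \<tau>2 * (x n)^2 / 2)"
    using integral_PiM_abs_affine_form_le[where M=M, OF M] m0 tau_nonneg
    by (intro mult_left_mono add_right_mono divide_right_mono mult_right_mono) auto
  finally show ?thesis by (simp add: m_def algebra_simps)
qed

lemma corr_lift: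
  fixes A B :: "nat \<Rightarrow> real measure"
  assumes A: "\<And>i. standardized (A i)" and B: "\<And>i. standardized (B i)" and G: "standardized G"
    and IH: "\<And>s t. \<bar>corr A n x z s t - corr B n x z s t\<bar>
      \<le> m * (\<tau>3 / 6 * sqrt (t^2 + S) * X + \<tau>2 / 2 * Y)"
    and m: "0 \<le> m" and X: "0 \<le> X" and S: "0 \<le> S"
  shows "\<bar>corr (A(n := G)) (Suc n) x z s t - corr (B(n := G)) (Suc n) x z s t\<bar>
    \<le> m * (\<tau>3 / 6 * sqrt (t^2 + (S + (z n)^2)) * X + \<tau>2 / 2 * Y)"
proof -
  have outer: "corr (C(n := G)) (Suc n) x z s t = (\<integral>y. corr C n x z (s + y * x n) (t + y * z n) \<partial>G)"
    and int_outer: "integrable G (\<lambda>y. corr C n x z (s + y * x n) (t + y * z n))"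
    if "\<And>i. standardized (C i)" for C
    using corr_Suc(3,4)[where M="C(n := G)" and n=n and x=x and z=z and s=s and t=t]
      corr_cong[of n "C(n := G)" C] that G
    by simp_all
  interpret prob_space G using G by (rule standardizedD)
  have sq: "integrable G (\<lambda>y. (t + y * z n)^2 + S)"
    "(\<integral>y. (t + y * z n)^2 + S \<partial>G) = t^2 + (S + (z n)^2)"
    using integral_standardized_affine_square[OF G, of t "z n"] by (simp_all add: prob_space)
  note jensen = integral_sqrt_le[OF sq(1)]
  have int_bound: "integrable G (\<lambda>y. m * (\<tau>3 / 6 * sqrt ((t + y * z n)^2 + S) * X + \<tau>2 / 2 * Y))"
    using jensen(1) S by auto
  have "\<bar>corr (A(n := G)) (Suc n) x z s t - corr (B(n := G)) (Suc n) x z s t\<bar>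
      = \<bar>\<integral>y. corr A n x z (s + y * x n) (t + y * z n) - corr B n x z (s + y * x n) (t + y * z n) \<partial>G\<bar>"
    using outer[OF A] outer[OF B] int_outer[OF A] int_outer[OF B] by simp
  also have "\<dots> \<le> (\<integral>y. m * (\<tau>3 / 6 * sqrt ((t + y * z n)^2 + S) * X + \<tau>2 / 2 * Y) \<partial>G)"
    using int_outer[OF A] int_outer[OF B] int_bound IH by (intro abs_integral_le_integral) auto
  also have "\<dots> = m * (\<tau>3 / 6 * (\<integral>y. sqrt ((t + y * z n)^2 + S) \<partial>G) * X + \<tau>2 / 2 * Y)"
    using jensen(1) S by (simp add: prob_space)
  also have "\<dots> \<le> m * (\<tau>3 / 6 * sqrt (t^2 + (S + (z n)^2)) * X + \<tau>2 / 2 * Y)"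
    using jensen(2) S m X tau_nonneg unfolding sq(2)
    by (intro mult_left_mono add_right_mono mult_right_mono) auto
  finally show ?thesis .
qed

lemma corr_comparison:
  assumes D: "standardized D" and G: "standardized G"
  shows "\<bar>corr (\<lambda>_. D) n x z s t - corr (\<lambda>_. G) n x z s t\<bar>
    \<le> ((\<integral>u. \<bar>u\<bar>^3 \<partial>D) + (\<integral>u. \<bar>u\<bar>^3 \<partial>G))
        * (\<tau>3 / 6 * sqrt (t^2 + (\<Sum>j<n. (z j)^2)) * (\<Sum>k<n. \<bar>x k\<bar>^3)
          + \<tau>2 / 2 * (\<Sum>k<n. (x k)^2 * \<bar>z k\<bar>))"
proof (induction n arbitrary: s t)
  case 0
  have "corr M 0 x z s t = \<theta> s * t" if "\<And>i. standardized (M i)" for M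
  proof -
    interpret prob_space "PiM {} M" using that by (intro prob_space_PiM standardizedD)
    show ?thesis by (simp add: corr_def inner_n_def prob_space)
  qed
  then show ?case using D G by simp
next
  case (Suc n)
  define m where "m = (\<integral>u. \<bar>u\<bar>^3 \<partial>D) + (\<integral>u. \<bar>u\<bar>^3 \<partial>G)"
  define S where "S = (\<Sum>j<n. (z j)^2)"
  define X where "X = (\<Sum>k<n. \<bar>x k\<bar>^3)"
  define Y where "Y = (\<Sum>k<n. (x k)^2 * \<bar>z k\<bar>)"
  have m0: "0 \<le> m" unfolding m_def by (intro add_nonneg_nonneg integral_nonneg) auto
  have "0 \<le> S" "0 \<le> X" by (simp_all add: S_def X_def sum_nonneg)
  \<comment> \<open>the hybrid law, D on the first n coordinates and G on the last, lies in between\<close>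
  have upd: "(\<lambda>_. D)(n := D) = (\<lambda>_. D)" "(\<lambda>_. G)(n := G) = (\<lambda>_. G)" by auto
  have swap: "\<bar>corr (\<lambda>_. D) (Suc n) x z s t - corr ((\<lambda>_. D)(n := G)) (Suc n) x z s t\<bar>
      \<le> m * (\<tau>3 / 6 * \<bar>x n\<bar>^3 * sqrt (t^2 + S) + \<tau>2 / 2 * (x n)^2 * \<bar>z n\<bar>)"
    using corr_swap_last[of "\<lambda>_. D" D G n x z s t] D G by (simp add: upd m_def S_def)
  have lift: "\<bar>corr ((\<lambda>_. D)(n := G)) (Suc n) x z s t - corr (\<lambda>_. G) (Suc n) x z s t\<bar>
      \<le> m * (\<tau>3 / 6 * sqrt (t^2 + (S + (z n)^2)) * X + \<tau>2 / 2 * Y)"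
    using corr_lift[of "\<lambda>_. D" "\<lambda>_. G" G n x z m S X Y s t] Suc.IH D G m0 \<open>0 \<le> S\<close> \<open>0 \<le> X\<close>
    by (simp add: upd m_def S_def X_def Y_def)
  have mono: "m * (\<tau>3 / 6 * \<bar>x n\<bar>^3 * sqrt (t^2 + S) + \<tau>2 / 2 * (x n)^2 * \<bar>z n\<bar>)
      \<le> m * (\<tau>3 / 6 * \<bar>x n\<bar>^3 * sqrt (t^2 + (S + (z n)^2)) + \<tau>2 / 2 * (x n)^2 * \<bar>z n\<bar>)"
    using m0 tau_nonneg by (intro mult_left_mono add_right_mono) auto
  have sums: "(\<Sum>j<Suc n. (z j)^2) = S + (z n)^2" "(\<Sum>k<Suc n. \<bar>x k\<bar>^3) = X + \<bar>x n\<bar>^3"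
    "(\<Sum>k<Suc n. (x k)^2 * \<bar>z k\<bar>) = Y + (x n)^2 * \<bar>z n\<bar>"
    by (simp_all add: S_def X_def Y_def)
  have "m * (\<tau>3 / 6 * sqrt (t^2 + (S + (z n)^2)) * (X + \<bar>x n\<bar>^3) + \<tau>2 / 2 * (Y + (x n)^2 * \<bar>z n\<bar>))
      = m * (\<tau>3 / 6 * \<bar>x n\<bar>^3 * sqrt (t^2 + (S + (z n)^2)) + \<tau>2 / 2 * (x n)^2 * \<bar>z n\<bar>)
        + m * (\<tau>3 / 6 * sqrt (t^2 + (S + (z n)^2)) * X + \<tau>2 / 2 * Y)"
    by (simp add: algebra_simps)
  then show ?case
    unfolding sums m_def[symmetric] using swap lift mono by linarith
qed

lemma corr_gaussian_comparison:
  assumes D: "standardized D" and D4: "integrable D (\<lambda>u. u^4)"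
    and x: "(\<Sum>k<n. (x k)^2) \<le> 1" and z: "(\<Sum>k<n. (z k)^2) \<le> 1"
  shows "\<bar>corr (\<lambda>_. D) n x z 0 0 - corr (\<lambda>_. std_gaussian) n x z 0 0\<bar>
    \<le> 3 / 2 * (\<tau>2 + \<tau>3) * (\<integral>u. u^4 \<partial>D) * linf_norm n x"
proof -
  define m4 where "m4 = (\<integral>u. u^4 \<partial>D)"
  define L where "L = linf_norm n x"
  have m4: "1 \<le> m4" unfolding m4_def by (rule standardized_moment4_ge_1[OF D D4])
  have m: "(\<integral>u. \<bar>u\<bar>^3 \<partial>D) + (\<integral>u. \<bar>u\<bar>^3 \<partial>std_gaussian) \<le> 3 * m4"
    using standardized_abs_moment3_le_moment4[OF D D4] std_gaussian_abs_moment3_le m4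
    unfolding m4_def by linarith
  have L0: "0 \<le> L" unfolding L_def by (rule linf_norm_nonneg)
  have bracket: "\<tau>3 / 6 * sqrt (0^2 + (\<Sum>k<n. (z k)^2)) * (\<Sum>k<n. \<bar>x k\<bar>^3)
      + \<tau>2 / 2 * (\<Sum>k<n. (x k)^2 * \<bar>z k\<bar>) \<le> \<tau>3 / 6 * 1 * L + \<tau>2 / 2 * L"
    using z tau_nonneg sum_abs_cube_le_linf_norm[OF x] sum_square_mult_abs_le_linf_norm[OF x z]
    unfolding L_def by (intro add_mono mult_mono mult_left_mono) (auto intro: sum_nonneg)
  have "\<bar>corr (\<lambda>_. D) n x z 0 0 - corr (\<lambda>_. std_gaussian) n x z 0 0\<bar>
      \<le> ((\<integral>u. \<bar>u\<bar>^3 \<partial>D) + (\<integral>u. \<bar>u\<bar>^3 \<partial>std_gaussian))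
        * (\<tau>3 / 6 * sqrt (0^2 + (\<Sum>k<n. (z k)^2)) * (\<Sum>k<n. \<bar>x k\<bar>^3)
          + \<tau>2 / 2 * (\<Sum>k<n. (x k)^2 * \<bar>z k\<bar>))"
    by (rule corr_comparison[OF D standardized_std_gaussian])
  also have "\<dots> \<le> (3 * m4) * (\<tau>3 / 6 * 1 * L + \<tau>2 / 2 * L)"
    using m bracket m4 tau_nonneg
    by (intro mult_mono) (auto intro!: add_nonneg_nonneg mult_nonneg_nonneg sum_nonneg)
  also have "\<dots> \<le> 3 / 2 * (\<tau>2 + \<tau>3) * m4 * L"
    using mult_nonneg_nonneg[OF mult_nonneg_nonneg[of m4 L] tau_nonneg(2)] m4 L0
    by (simp add: algebra_simps)
  finally show ?thesis unfolding m4_def L_def .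
qed

end

theorem lemma3p1:
  "\<exists>C>0. \<forall>(n::nat) (x::nat \<Rightarrow> real) (z::nat \<Rightarrow> real) (D::real measure) (\<kappa>::real)
      (\<theta>::real \<Rightarrow> real) \<theta>1 \<theta>2 \<theta>3 (\<tau>2::real) (\<tau>3::real).
     (\<Sum>i<n. (x i)\<^sup>2) \<le> 1 \<longrightarrow>
     (\<Sum>i<n. (z i)\<^sup>2) \<le> 1 \<longrightarrow>
     prob_space D \<longrightarrow> sets D = sets borel \<longrightarrow>
     integrable D (\<lambda>t. t) \<longrightarrow> (\<integral>t. t \<partial>D) = 0 \<longrightarrow>
     integrable D (\<lambda>t. t\<^sup>2) \<longrightarrow> (\<integral>t. t\<^sup>2 \<partial>D) = 1 \<longrightarrow>
     subgaussian_norm_le D \<kappa> \<longrightarrow>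
     \<theta> \<in> borel_measurable borel \<longrightarrow>
     (\<forall>t. (\<theta> has_real_derivative \<theta>1 t) (at t)) \<longrightarrow>
     (\<forall>t. (\<theta>1 has_real_derivative \<theta>2 t) (at t)) \<longrightarrow>
     (\<forall>t. (\<theta>2 has_real_derivative \<theta>3 t) (at t)) \<longrightarrow>
     (\<forall>t. \<bar>\<theta>2 t\<bar> \<le> \<tau>2) \<longrightarrow>
     (\<forall>t. \<bar>\<theta>3 t\<bar> \<le> \<tau>3) \<longrightarrow>
     \<bar>(\<integral>a. \<theta> (inner_n n a x) * inner_n n a z \<partial>(PiM {..<n} (\<lambda>_. D)))
      - (\<integral>g. \<theta> (inner_n n g x) * inner_n n g z \<partial>(PiM {..<n} (\<lambda>_. std_gaussian)))\<bar>
     \<le> C * (\<tau>2 + \<tau>3) * (\<integral>t. t ^ 4 \<partial>D) * linf_norm n x"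
proof (intro exI[of _ "3 / 2"] conjI allI impI)
  fix n :: nat and x z :: "nat \<Rightarrow> real" and D :: "real measure" and \<kappa> :: real
    and \<theta> \<theta>1 \<theta>2 \<theta>3 :: "real \<Rightarrow> real" and \<tau>2 \<tau>3 :: real
  assume x: "(\<Sum>i<n. (x i)\<^sup>2) \<le> 1" and z: "(\<Sum>i<n. (z i)\<^sup>2) \<le> 1"
    and law: "prob_space D" "sets D = sets borel" "integrable D (\<lambda>t. t)" "(\<integral>t. t \<partial>D) = 0"
      "integrable D (\<lambda>t. t\<^sup>2)" "(\<integral>t. t\<^sup>2 \<partial>D) = 1"
    and subgaussian: "subgaussian_norm_le D \<kappa>"
    and \<theta>: "\<theta> \<in> borel_measurable borel" "\<forall>t. (\<theta> has_real_derivative \<theta>1 t) (at t)"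
      "\<forall>t. (\<theta>1 has_real_derivative \<theta>2 t) (at t)" "\<forall>t. (\<theta>2 has_real_derivative \<theta>3 t) (at t)"
      "\<forall>t. \<bar>\<theta>2 t\<bar> \<le> \<tau>2" "\<forall>t. \<bar>\<theta>3 t\<bar> \<le> \<tau>3"
  interpret smooth_link \<theta> \<theta>1 \<theta>2 \<theta>3 \<tau>2 \<tau>3
    by unfold_locales (simp_all add: \<theta>)
  have D: "standardized D"
    using law integrable_abs_power_if_subgaussian[OF subgaussian, of 3] by (simp add: standardized_def)
  have "integrable D (\<lambda>t. \<bar>t\<bar>^4)" by (rule integrable_abs_power_if_subgaussian[OF subgaussian]) simp
  then have D4: "integrable D (\<lambda>t. t^4)" by simp
  show "\<bar>(\<integral>a. \<theta> (inner_n n a x) * inner_n n a z \<partial>(PiM {..<n} (\<lambda>_. D)))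
      - (\<integral>g. \<theta> (inner_n n g x) * inner_n n g z \<partial>(PiM {..<n} (\<lambda>_. std_gaussian)))\<bar>
     \<le> 3 / 2 * (\<tau>2 + \<tau>3) * (\<integral>t. t ^ 4 \<partial>D) * linf_norm n x"
    using corr_gaussian_comparison[OF D D4 x z] by (simp add: corr_def)
qed simp

end
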